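(* There exists a function $\Omega\in L^1(\mathbf S^1)$ with mean value zero such that $\Omega\notin H^1(\mathbf S^1)$ but, for every $\alpha>0$, $$\sup_{\xi\in\mathbf S^{1}}\int_{\mathbf S^{1}}|\Omega(\theta)|\Big(\ln\frac{1}{|\theta\cdot\xi|}\Big)^{1+\alpha}d\theta<\infty.$$
   Context: $H^1(\mathbf S^1)$ denotes the Hardy space on the unit circle in the sense of Coifman and Weiss (equivalently, identifying $\mathbf S^1$ with $[0,1]$ via $x\mapsto(\cos 2\pi x,\sin 2\pi x)$, a mean-zero integrable $\Omega$ lies in $H^1$ iff the Hilbert transform on $\mathbb R$ of the corresponding function on $[0,1]$ extended by zero is integrable). *)

theory Defs
  imports "HOL-Analysis.Analysis"
begin

text \<open>We identify the unit circle with [0,1] via x \<mapsto> (cos 2\<pi>x, sin 2\<pi>x).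
  A function on the circle is thus a real function on [0,1].\<close>

definition trunc_hilbert :: "(real \<Rightarrow> real) \<Rightarrow> real \<Rightarrow> real \<Rightarrow> real" where
  "trunc_hilbert f \<epsilon> x = (1 / pi) * (LINT y:{y. \<epsilon> < \<bar>x - y\<bar>}|lborel. f y / (x - y))"

text \<open>Mean-zero integrable \<Omega> on [0,1] belongs to H^1 iff the Hilbert transform on the
  real line of \<Omega> extended by zero (defined a.e. as the principal value limit) is integrable.\<close>
definition in_H1_circle :: "(real \<Rightarrow> real) \<Rightarrow> bool" where
  "in_H1_circle \<Omega> \<longleftrightarrow>
     set_integrable lborel {0..1} \<Omega> \<and> (LINT x:{0..1}|lborel. \<Omega> x) = 0 \<and>
     (\<exists>g. integrable lborel g \<and>
        (AE x in lborel.
           ((\<lambda>\<epsilon>. trunc_hilbert (\<lambda>y. indicator {0..1} y * \<Omega> y) \<epsilon> x) \<longlongrightarrow> g x) (at_right 0)))"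

end

theory Submission
  imports Defs
begin

text \<open>
  The function is a sum of layers with disjoint supports. Layer n lives on an interval of
  length l = 2^-(n+1) and consists of N = 2^(4^(n+1)) dipoles h (1[b,b+d] - 1[b+R,b+R+d]),
  spaced l/N apart, with R = l/(4N), d = R/N and h = 4lN. Each layer has mean zero and
  L^1 norm 2l^2, so the sum is integrable with mean zero.

  For the logarithmic condition, ln (1/|cos 2 pi u|)^(1+alpha) is dominated by a multiple
  of |u - z| powr (-1/2) around the nearest zero z of cos (2 pi u), and the bumps of a layer
  are so thin and sparse that the integral of |layer| |x - w| powr (-1/2) is O(l) uniformly
  in w.

  On the other hand, on the window [b - R + d, b - d] just left of a dipole every dipole
  contributes to the Hilbert transform with the same sign, and the dipole at b alone
  contributes at least h d / (2 pi (b + d - x)). Integrating over the window gives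
  h d ln (N/2) / (2 pi), and summing over the N dipoles of a layer gives
  l^2 ln (N/2) / (2 pi) >= 3 ln 2 / (8 pi). As there are infinitely many layers, the
  Hilbert transform is not integrable.
\<close>

section \<open>Integrals of the kernel |x - w| powr (-1/2)\<close>

definition inv_sqrt_dist :: "real \<Rightarrow> real \<Rightarrow> ennreal" where
  "inv_sqrt_dist w x = ennreal (\<bar>x - w\<bar> powr (-1/2))"

lemma inv_sqrt_dist_measurable [measurable]: "inv_sqrt_dist w \<in> borel_measurable borel"
  unfolding inv_sqrt_dist_def by measurable

lemma inv_sqrt_dist_antimono:
  "0 < \<bar>s - w\<bar> \<Longrightarrow> \<bar>s - w\<bar> \<le> \<bar>x - w\<bar> \<Longrightarrow> inv_sqrt_dist w x \<le> inv_sqrt_dist w s"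
  unfolding inv_sqrt_dist_def by (intro ennreal_leI powr_mono2') auto

lemma nn_integral_powr_neg_half:
  assumes "0 < r"
  shows "(\<integral>\<^sup>+s. indicator {0..r} s * ennreal (s powr (-1/2)) \<partial>lborel) = 2 * sqrt r"
proof -
  have "((\<lambda>s. s powr (-1/2)) has_integral (r powr (-1/2 + 1) / (-1/2 + 1))) {0..r}"
    by (rule has_integral_powr_from_0) (use assms in auto)
  then have "((\<lambda>s. s powr (-1/2)) has_integral (2 * sqrt r)) {0..r}"
    using assms by (simp add: powr_half_sqrt mult.commute)
  from nn_integral_has_integral_lebesgue'[OF _ this]
  have "(\<integral>\<^sup>+s. ennreal (s powr (-1/2)) * indicator {0..r} s \<partial>lborel) = ennreal (2 * sqrt r)"
    by simp
  then show ?thesis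
    by (simp add: mult.commute)
qed

lemma nn_integral_inv_sqrt_dist_Icc:
  assumes "0 < r"
  shows "(\<integral>\<^sup>+x. indicator {w-r..w+r} x * inv_sqrt_dist w x \<partial>lborel) \<le> 4 * sqrt r"
proof -
  have side: "(\<integral>\<^sup>+x. indicator J x * inv_sqrt_dist w x \<partial>lborel) = 2 * sqrt r"
    if "J \<in> sets borel" "\<bar>c\<bar> = 1" "\<And>s. w + c * s \<in> J \<longleftrightarrow> s \<in> {0..r}" for c and J :: "real set"
  proof -
    have "(\<integral>\<^sup>+x. indicator J x * inv_sqrt_dist w x \<partial>lborel)
        = (\<integral>\<^sup>+s. indicator J (w + c * s) * inv_sqrt_dist w (w + c * s) \<partial>lborel)"
      using nn_integral_real_affine[of "\<lambda>x. indicator J x * inv_sqrt_dist w x" c w] that(1,2) by auto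
    also have "\<dots> = (\<integral>\<^sup>+s. indicator {0..r} s * ennreal (s powr (-1/2)) \<partial>lborel)"
      using that by (intro nn_integral_cong) (auto simp: inv_sqrt_dist_def indicator_def abs_mult)
    finally show ?thesis
      using nn_integral_powr_neg_half[OF assms] by simp
  qed
  have "(\<integral>\<^sup>+x. indicator {w-r..w+r} x * inv_sqrt_dist w x \<partial>lborel)
      \<le> (\<integral>\<^sup>+x. indicator {w-r..w} x * inv_sqrt_dist w x + indicator {w..w+r} x * inv_sqrt_dist w x \<partial>lborel)"
    by (intro nn_integral_mono) (auto simp: indicator_def)
  also have "\<dots> = (\<integral>\<^sup>+x. indicator {w-r..w} x * inv_sqrt_dist w x \<partial>lborel)
                    + (\<integral>\<^sup>+x. indicator {w..w+r} x * inv_sqrt_dist w x \<partial>lborel)"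
    by (rule nn_integral_add) auto
  also have "\<dots> = ennreal (2 * sqrt r) + ennreal (2 * sqrt r)"
    using side[of "{w-r..w}" "-1"] side[of "{w..w+r}" 1] by (auto simp: algebra_simps)
  also have "\<dots> = 4 * sqrt r"
    using assms by (subst ennreal_plus[symmetric]) auto
  finally show ?thesis .
qed

lemma nn_integral_inv_sqrt_dist_le:
  assumes "0 < r" "A \<in> sets borel"
  shows "(\<integral>\<^sup>+x. indicator A x * inv_sqrt_dist w x \<partial>lborel)
           \<le> 4 * sqrt r + emeasure lborel A * ennreal (r powr (-1/2))"
proof -
  have "indicator A x * inv_sqrt_dist w x
          \<le> indicator {w-r..w+r} x * inv_sqrt_dist w x + ennreal (r powr (-1/2)) * indicator A x" for x
  proof (cases "\<bar>x - w\<bar> \<le> r")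
    case False
    then have "inv_sqrt_dist w x \<le> ennreal (r powr (-1/2))"
      unfolding inv_sqrt_dist_def using assms(1) by (intro ennreal_leI powr_mono2') auto
    then show ?thesis
      by (auto simp: indicator_def)
  qed (auto simp: indicator_def)
  then have "(\<integral>\<^sup>+x. indicator A x * inv_sqrt_dist w x \<partial>lborel)
      \<le> (\<integral>\<^sup>+x. indicator {w-r..w+r} x * inv_sqrt_dist w x + ennreal (r powr (-1/2)) * indicator A x \<partial>lborel)"
    by (intro nn_integral_mono)
  also have "\<dots> = (\<integral>\<^sup>+x. indicator {w-r..w+r} x * inv_sqrt_dist w x \<partial>lborel)
                    + ennreal (r powr (-1/2)) * emeasure lborel A"
    using assms(2) by (subst nn_integral_add) (auto simp: nn_integral_cmult_indicator)
  also have "\<dots> \<le> 4 * sqrt r + emeasure lborel A * ennreal (r powr (-1/2))"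
    using nn_integral_inv_sqrt_dist_Icc[OF assms(1), of w] by (simp add: mult.commute add_right_mono)
  finally show ?thesis .
qed

lemma nn_integral_inv_sqrt_dist_short_Icc:
  assumes "0 < d"
  shows "(\<integral>\<^sup>+x. indicator {a..a+d} x * inv_sqrt_dist w x \<partial>lborel) \<le> ennreal (5 * sqrt d)"
proof -
  have "d * d powr (-1/2) = sqrt d"
    using assms by (simp add: powr_minus_divide powr_half_sqrt real_div_sqrt)
  then have "(\<integral>\<^sup>+x. indicator {a..a+d} x * inv_sqrt_dist w x \<partial>lborel) \<le> ennreal (4 * sqrt d) + ennreal (sqrt d)"
    using nn_integral_inv_sqrt_dist_le[OF assms, of "{a..a+d}" w] assms by (simp add: ennreal_mult[symmetric])
  also have "\<dots> = ennreal (5 * sqrt d)"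
    using assms by (subst ennreal_plus[symmetric]) auto
  finally show ?thesis .
qed

lemma nn_integral_indicator_le_measure_ratio:
  fixes f :: "'a \<Rightarrow> ennreal"
  assumes I: "I \<in> sets M" "emeasure M I = ennreal a" "0 \<le> a"
    and S: "S \<in> sets M" "emeasure M S = ennreal b" "0 < b"
    and le: "\<And>x s. x \<in> I \<Longrightarrow> s \<in> S \<Longrightarrow> f x \<le> f s"
  shows "(\<integral>\<^sup>+x. indicator I x * f x \<partial>M) \<le> ennreal (a / b) * (\<integral>\<^sup>+s. indicator S s * f s \<partial>M)"
proof -
  define T where "T = (\<integral>\<^sup>+s. indicator S s * f s \<partial>M)"
  have "f x \<le> ennreal (1 / b) * T" if "x \<in> I" for x
  proof -
    have "ennreal b * f x = (\<integral>\<^sup>+s. f x * indicator S s \<partial>M)"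
      using S by (simp add: nn_integral_cmult_indicator mult.commute)
    also have "\<dots> \<le> T"
      unfolding T_def using le[OF that] by (intro nn_integral_mono) (auto simp: indicator_def)
    finally have "ennreal (1 / b) * (ennreal b * f x) \<le> ennreal (1 / b) * T"
      by (rule mult_left_mono) simp
    then show ?thesis
      using S(3) by (simp add: mult.assoc[symmetric] ennreal_mult[symmetric] del: ennreal_mult)
  qed
  then have "(\<integral>\<^sup>+x. indicator I x * f x \<partial>M) \<le> (\<integral>\<^sup>+x. (ennreal (1 / b) * T) * indicator I x \<partial>M)"
    by (intro nn_integral_mono) (auto simp: indicator_def)
  also have "\<dots> = ennreal (1 / b) * T * ennreal a"
    using I by (simp add: nn_integral_cmult_indicator)
  also have "\<dots> = ennreal (a / b) * T"
    using I(3) S(3) by (simp add: ennreal_mult[symmetric] mult.commute mult.left_commute del: ennreal_mult)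
  finally show ?thesis
    unfolding T_def .
qed

lemma sum_nn_integral_indicator_le:
  fixes f :: "'a \<Rightarrow> ennreal"
  assumes "finite J" "disjoint_family_on S J"
    and "\<And>j. j \<in> J \<Longrightarrow> S j \<in> sets M" "\<And>j. j \<in> J \<Longrightarrow> S j \<subseteq> H"
    and "f \<in> borel_measurable M"
  shows "(\<Sum>j\<in>J. \<integral>\<^sup>+x. indicator (S j) x * f x \<partial>M) \<le> (\<integral>\<^sup>+x. indicator H x * f x \<partial>M)"
proof -
  have "(\<Sum>j\<in>J. indicator (S j) x * f x) \<le> indicator H x * f x" for x
  proof (cases "\<exists>j\<in>J. x \<in> S j")
    case True
    then obtain j where "j \<in> J" "x \<in> S j"
      by blast
    moreover from this have "x \<in> H"
      using assms(4) by blast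
    ultimately show ?thesis
      using sum_indicator_disjoint_family[OF assms(2) _ assms(1), of x j "\<lambda>_. f x"]
      by (simp add: mult.commute)
  qed (auto simp: indicator_def)
  then have "(\<integral>\<^sup>+x. (\<Sum>j\<in>J. indicator (S j) x * f x) \<partial>M) \<le> (\<integral>\<^sup>+x. indicator H x * f x \<partial>M)"
    by (intro nn_integral_mono)
  then show ?thesis
    using assms(3,5) by (subst nn_integral_sum[symmetric]) auto
qed

lemma
  fixes x :: real
  shows finite_nat_dist_less_one: "finite {i::nat. \<bar>x - real i\<bar> < 1}"
    and card_nat_dist_less_one: "card {i::nat. \<bar>x - real i\<bar> < 1} \<le> 2"
proof -
  have sub: "{i::nat. \<bar>x - real i\<bar> < 1} \<subseteq> {nat \<lfloor>x\<rfloor>, nat (\<lfloor>x\<rfloor> + 1)}"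
  proof
    fix i :: nat
    assume "i \<in> {i. \<bar>x - real i\<bar> < 1}"
    then have "\<lfloor>x\<rfloor> \<le> int i" "int i - 1 \<le> \<lfloor>x\<rfloor>"
      unfolding le_floor_iff by (auto simp: abs_less_iff floor_le_iff)
    then show "i \<in> {nat \<lfloor>x\<rfloor>, nat (\<lfloor>x\<rfloor> + 1)}"
      by auto
  qed
  then show "finite {i::nat. \<bar>x - real i\<bar> < 1}"
    by (rule finite_subset) simp
  have "card {i::nat. \<bar>x - real i\<bar> < 1} \<le> card {nat \<lfloor>x\<rfloor>, nat (\<lfloor>x\<rfloor> + 1)}"
    by (rule card_mono[OF _ sub]) simp
  also have "\<dots> \<le> 2"
    by (simp add: card_insert_if)
  finally show "card {i::nat. \<bar>x - real i\<bar> < 1} \<le> 2" .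
qed

lemma sum_if_nat_dist_less_one_le:
  fixes a :: ennreal
  shows "(\<Sum>i<N. if \<bar>x - real i\<bar> < 1 then a else 0) \<le> 2 * a"
proof -
  let ?near = "{i. \<bar>x - real i\<bar> < 1}"
  have "card ({..<N} \<inter> ?near) \<le> card ?near"
    by (rule card_mono[OF finite_nat_dist_less_one]) auto
  also have "\<dots> \<le> 2"
    by (rule card_nat_dist_less_one)
  finally have "of_nat (card ({..<N} \<inter> ?near)) * a \<le> of_nat 2 * a"
    by (intro mult_right_mono) auto
  then show ?thesis
    by (simp add: sum.If_cases)
qed

lemma sum_nn_integral_progression_gaps_le:
  fixes f :: "real \<Rightarrow> ennreal"
  assumes d: "0 < d" "d < P" and f: "f \<in> borel_measurable borel"
  shows "(\<Sum>j<Suc N. \<integral>\<^sup>+x. indicator {c + real j * P - (P - d) <..< c + real j * P} x * f x \<partial>lborel)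
           \<le> (\<integral>\<^sup>+x. indicator {c - P .. c + real N * P} x * f x \<partial>lborel)"
proof (rule sum_nn_integral_indicator_le)
  show "disjoint_family_on (\<lambda>j. {c + real j * P - (P - d) <..< c + real j * P}) {..<Suc N}"
    unfolding disjoint_family_on_def
  proof (intro ballI impI)
    fix j k :: nat assume "j \<noteq> k"
    then have "real j + 1 \<le> real k \<or> real k + 1 \<le> real j"
      by linarith
    then have "(real j + 1) * P \<le> real k * P \<or> (real k + 1) * P \<le> real j * P"
      using d by (auto intro: mult_right_mono)
    then show "{c + real j * P - (P - d) <..< c + real j * P} \<inter> {c + real k * P - (P - d) <..< c + real k * P} = {}"
      using d by (auto simp: algebra_simps)
  qed
  show "{c + real j * P - (P - d) <..< c + real j * P} \<subseteq> {c - P .. c + real N * P}" if "j \<in> {..<Suc N}" for j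
  proof -
    have "0 \<le> real j * P" "real j * P \<le> real N * P"
      using that d by (auto intro: mult_right_mono)
    then have "c - P \<le> c + real j * P - (P - d)" "c + real j * P \<le> c + real N * P"
      using d by linarith+
    then show ?thesis
      by fastforce
  qed
qed (use f in auto)

lemma nn_integral_inv_sqrt_dist_Icc_le_gaps:
  assumes d: "0 < d" "d < P"
  shows "(\<integral>\<^sup>+x. indicator {a..a+d} x * inv_sqrt_dist w x \<partial>lborel)
      \<le> (if \<bar>w - a\<bar> < P then ennreal (5 * sqrt d) else 0)
          + ennreal (d / (P - d)) * ((\<integral>\<^sup>+x. indicator {a - (P - d) <..< a} x * inv_sqrt_dist w x \<partial>lborel)
                                  + (\<integral>\<^sup>+x. indicator {a + d <..< a + P} x * inv_sqrt_dist w x \<partial>lborel))"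
    (is "?I \<le> _ + ?K * (?L + ?R)")
proof (cases "\<bar>w - a\<bar> < P")
  case True
  then show ?thesis
    using nn_integral_inv_sqrt_dist_short_Icc[OF d(1)] by (simp add: add_increasing2)
next
  case False
  have "?I \<le> ?K * ?L \<or> ?I \<le> ?K * ?R"
  proof (cases "w < a")
    case True
    then show ?thesis
      using False d
      by (intro disjI1 nn_integral_indicator_le_measure_ratio inv_sqrt_dist_antimono) auto
  next
    case False
    then show ?thesis
      using \<open>\<not> \<bar>w - a\<bar> < P\<close> d
      by (intro disjI2 nn_integral_indicator_le_measure_ratio inv_sqrt_dist_antimono) auto
  qed
  moreover have "?K * ?L \<le> ?K * (?L + ?R)" "?K * ?R \<le> ?K * (?L + ?R)"
    by (intro mult_left_mono; simp add: add_increasing add_increasing2)+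
  ultimately have "?I \<le> ?K * (?L + ?R)"
    by (blast intro: order_trans)
  then show ?thesis
    using False by simp
qed

text \<open>
  An interval of the progression that is not close to w is compared with a neighbouring
  gap that separates it from w, on which the kernel is larger; the gaps are disjoint.
  At most two intervals are close to w, and they are estimated directly.
\<close>

lemma nn_integral_inv_sqrt_dist_progression:
  fixes N :: nat
  assumes d: "0 < d" "2 * d \<le> P"
  shows "(\<Sum>i<N. \<integral>\<^sup>+x. indicator {c + real i * P .. c + real i * P + d} x * inv_sqrt_dist w x \<partial>lborel)
      \<le> ennreal (10 * sqrt d)
          + ennreal (2 * d / (P - d)) * (\<integral>\<^sup>+x. indicator {c - P .. c + real N * P} x * inv_sqrt_dist w x \<partial>lborel)"
proof -
  define T where "T j = (\<integral>\<^sup>+x. indicator {c + real j * P - (P - d) <..< c + real j * P} x * inv_sqrt_dist w x \<partial>lborel)"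
    for j :: nat
  define H where "H = (\<integral>\<^sup>+x. indicator {c - P .. c + real N * P} x * inv_sqrt_dist w x \<partial>lborel)"
  define K where "K = ennreal (d / (P - d))"
  have P: "0 < P" "d < P"
    using d by linarith+
  have near: "\<bar>w - (c + real i * P)\<bar> < P \<longleftrightarrow> \<bar>(w - c) / P - real i\<bar> < 1" for i
    using P by (simp add: abs_less_iff field_simps)
  have each: "(\<integral>\<^sup>+x. indicator {c + real i * P .. c + real i * P + d} x * inv_sqrt_dist w x \<partial>lborel)
      \<le> (if \<bar>(w - c) / P - real i\<bar> < 1 then ennreal (5 * sqrt d) else 0) + K * (T i + T (Suc i))" for i
    using nn_integral_inv_sqrt_dist_Icc_le_gaps[OF d(1) P(2), of "c + real i * P" w]
    unfolding near K_def T_def by (simp add: algebra_simps)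
  have "(\<Sum>i<N. \<integral>\<^sup>+x. indicator {c + real i * P .. c + real i * P + d} x * inv_sqrt_dist w x \<partial>lborel)
      \<le> (\<Sum>i<N. if \<bar>(w - c) / P - real i\<bar> < 1 then ennreal (5 * sqrt d) else 0)
          + K * ((\<Sum>i<N. T i) + (\<Sum>i<N. T (Suc i)))"
    using sum_mono[of "{..<N}", OF each] by (simp add: sum.distrib sum_distrib_left distrib_left)
  also have "\<dots> \<le> 2 * ennreal (5 * sqrt d) + K * (H + H)"
  proof -
    have gaps: "(\<Sum>j<Suc N. T j) \<le> H"
      unfolding T_def H_def using d P by (intro sum_nn_integral_progression_gaps_le) auto
    have "(\<Sum>i<N. T i) \<le> (\<Sum>j<Suc N. T j)"
      by (simp add: add_increasing2)
    moreover have "(\<Sum>i<N. T (Suc i)) \<le> (\<Sum>j<Suc N. T j)"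
      by (subst sum.lessThan_Suc_shift) (simp add: add_increasing)
    ultimately show ?thesis
      using gaps by (intro add_mono sum_if_nat_dist_less_one_le mult_left_mono order.trans[OF _ gaps]) auto
  qed
  also have "\<dots> = ennreal (10 * sqrt d) + ennreal (2 * d / (P - d)) * H"
  proof -
    have "2 * ennreal (5 * sqrt d) = ennreal (10 * sqrt d)"
      using ennreal_mult[of 2 "5 * sqrt d"] d by simp
    moreover have "K * 2 = ennreal (2 * d / (P - d))"
      using ennreal_mult[of "d / (P - d)" 2] P d unfolding K_def by (simp add: mult.commute)
    ultimately show ?thesis
      by (simp add: mult_2[symmetric] mult.assoc[symmetric])
  qed
  finally show ?thesis
    unfolding H_def .
qed

section \<open>The logarithmic weight\<close>

lemma ln_inverse_powr_le:
  fixes p e y :: real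
  assumes "0 < p" "0 < e" "0 < y" "y \<le> 1"
  shows "ln (1 / y) powr p \<le> (p / e) powr p * y powr (- e)"
proof -
  define Y where "Y = 1 / y"
  have Y: "1 \<le> Y"
    using assms by (simp add: Y_def)
  have "e / p * ln Y = ln (Y powr (e / p))"
    using Y by (simp add: ln_powr)
  also have "\<dots> \<le> Y powr (e / p)"
    using Y ln_le_minus_one[of "Y powr (e / p)"] by simp
  finally have "ln Y \<le> p / e * Y powr (e / p)"
    using assms by (simp add: field_simps)
  then have "ln Y powr p \<le> (p / e * Y powr (e / p)) powr p"
    using Y assms by (intro powr_mono2) auto
  also have "\<dots> = (p / e) powr p * (Y powr (e / p)) powr p"
    using Y assms by (subst powr_mult) auto
  also have "(Y powr (e / p)) powr p = Y powr e"
    using assms by (simp add: powr_powr)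
  also have "Y powr e = y powr (- e)"
    using assms by (simp add: Y_def powr_divide powr_minus_divide)
  finally show ?thesis
    unfolding Y_def .
qed

lemma abs_cos_add_eq_abs_sin:
  fixes a y :: real
  assumes "cos a = 0"
  shows "\<bar>cos (a + y)\<bar> = \<bar>sin y\<bar>"
proof -
  have "(sin a)\<^sup>2 + (cos a)\<^sup>2 = 1"
    by simp
  with assms have "\<bar>sin a\<bar> = 1"
    by (auto simp: power2_eq_1_iff)
  with assms show ?thesis
    by (simp add: cos_add abs_mult)
qed

lemma sin_ge_half: assumes "0 \<le> y" "y \<le> pi / 2" shows "y / 2 \<le> sin y"
proof -
  have "\<bar>sin y - (\<Sum>m<3. sin_coeff m * y ^ m)\<bar> \<le> inverse (fact 3) * \<bar>y\<bar> ^ 3"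
    by (rule Maclaurin_sin_bound)
  then have remainder: "\<bar>sin y - y\<bar> \<le> y ^ 3 / 6"
    using assms by (simp add: sin_coeff_def eval_nat_numeral fact_numeral)
  have "pi \<le> 3.2"
    using pi_approx(2) by simp
  then have "y \<le> 1.6"
    using assms by linarith
  then have "y * (y * y) \<le> y * 3"
    using assms mult_mono[of y "1.6" y "1.6"] by (intro mult_left_mono) auto
  then have "y ^ 3 / 6 \<le> y / 2"
    by (simp add: power3_eq_cube)
  with remainder show ?thesis
    by linarith
qed

lemma abs_le_abs_sin_two_pi:
  fixes v :: real
  assumes "\<bar>v\<bar> \<le> 1/4"
  shows "\<bar>v\<bar> \<le> \<bar>sin (2 * pi * v)\<bar>"
proof -
  have "1 * \<bar>v\<bar> \<le> pi * \<bar>v\<bar>"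
    using pi_gt3 by (intro mult_right_mono) auto
  also have "\<dots> \<le> sin (2 * pi * \<bar>v\<bar>)"
    using sin_ge_half[of "2 * pi * \<bar>v\<bar>"] assms by simp
  also have "\<dots> = \<bar>sin (2 * pi * v)\<bar>"
  proof -
    have "0 \<le> sin (2 * pi * \<bar>v\<bar>)"
      using assms by (intro sin_ge_zero) auto
    then show ?thesis
      by (cases "0 \<le> v") auto
  qed
  finally show ?thesis
    by simp
qed

lemma abs_cos_two_pi_ge_dist_zero:
  fixes u :: real
  defines "z \<equiv> (2 * \<lfloor>2 * u\<rfloor> + 1) / 4"
  shows "cos (2 * pi * z) = 0" and "\<bar>u - z\<bar> \<le> 1/4" and "\<bar>u - z\<bar> \<le> \<bar>cos (2 * pi * u)\<bar>"
proof -
  have "\<lfloor>2 * u\<rfloor> \<le> 2 * u" "2 * u < \<lfloor>2 * u\<rfloor> + 1"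
    by linarith+
  then show close: "\<bar>u - z\<bar> \<le> 1/4"
    unfolding z_def by (simp add: abs_le_iff field_simps)
  show zero: "cos (2 * pi * z) = 0"
    unfolding cos_zero_iff_int
  proof (intro exI conjI)
    show "odd (2 * \<lfloor>2 * u\<rfloor> + 1)"
      by simp
    show "2 * pi * z = real_of_int (2 * \<lfloor>2 * u\<rfloor> + 1) * (pi / 2)"
      unfolding z_def by (simp add: field_simps)
  qed
  have "\<bar>cos (2 * pi * u)\<bar> = \<bar>sin (2 * pi * (u - z))\<bar>"
    using zero abs_cos_add_eq_abs_sin[of "2 * pi * z" "2 * pi * (u - z)"] by (simp add: algebra_simps)
  then show "\<bar>u - z\<bar> \<le> \<bar>cos (2 * pi * u)\<bar>"
    using abs_le_abs_sin_two_pi[OF close] by simp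
qed

lemma ln_inverse_abs_cos_powr_le:
  fixes u p :: real
  assumes "0 < p"
  defines "z \<equiv> (2 * \<lfloor>2 * u\<rfloor> + 1) / 4"
  shows "ln (1 / \<bar>cos (2 * pi * u)\<bar>) powr p \<le> (2 * p) powr p * \<bar>u - z\<bar> powr (-1/2)"
proof (cases "u = z")
  case True
  then have "cos (2 * pi * u) = 0"
    using abs_cos_two_pi_ge_dist_zero(1)[of u] unfolding z_def by (simp only:)
  then show ?thesis \<comment> \<open>the left-hand side is 0, since ln (1 / 0) = ln 0 = 0\<close>
    by simp
next
  case False
  have near: "\<bar>u - z\<bar> \<le> \<bar>cos (2 * pi * u)\<bar>" "\<bar>u - z\<bar> \<le> 1/4"
    unfolding z_def by (rule abs_cos_two_pi_ge_dist_zero)+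
  have "ln (1 / \<bar>cos (2 * pi * u)\<bar>) \<le> ln (1 / \<bar>u - z\<bar>)"
    using near False by (simp add: frac_le)
  moreover have "0 \<le> ln (1 / \<bar>cos (2 * pi * u)\<bar>)"
    using near False by simp
  ultimately have "ln (1 / \<bar>cos (2 * pi * u)\<bar>) powr p \<le> ln (1 / \<bar>u - z\<bar>) powr p"
    using assms by (intro powr_mono2) auto
  also have "\<dots> \<le> (p / (1/2)) powr p * \<bar>u - z\<bar> powr (-(1/2))"
    using assms near False by (intro ln_inverse_powr_le) auto
  finally show ?thesis
    by (simp add: mult.commute)
qed

lemma ln_inverse_abs_cos_powr_le_sum:
  fixes p x t :: real
  assumes "0 < p" "x \<in> {0..1}" "t \<in> {0..1}"
  shows "ln (1 / \<bar>cos (2 * pi * (x - t))\<bar>) powr p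
           \<le> (2 * p) powr p * (\<Sum>k\<in>{-2..2::int}. \<bar>x - (t + (2 * k + 1) / 4)\<bar> powr (-1/2))"
proof -
  define k where "k = \<lfloor>2 * (x - t)\<rfloor>"
  have "k \<in> {-2..2}"
    using assms unfolding k_def by (auto simp: le_floor_iff floor_le_iff)
  then have "\<bar>x - (t + (2 * k + 1) / 4)\<bar> powr (-1/2)
      \<le> (\<Sum>k\<in>{-2..2::int}. \<bar>x - (t + (2 * k + 1) / 4)\<bar> powr (-1/2))"
    by (intro member_le_sum) auto
  moreover have "ln (1 / \<bar>cos (2 * pi * (x - t))\<bar>) powr p \<le> (2 * p) powr p * \<bar>x - (t + (2 * k + 1) / 4)\<bar> powr (-1/2)"
    using ln_inverse_abs_cos_powr_le[OF assms(1), of "x - t"] by (simp add: k_def algebra_simps)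
  ultimately show ?thesis
    by (meson mult_left_mono order_trans powr_ge_zero)
qed

section \<open>Dipoles and their Hilbert transforms\<close>

definition dipole :: "real \<Rightarrow> real \<Rightarrow> real \<Rightarrow> real \<Rightarrow> real" where
  "dipole b R d y = indicator {b..b+d} y - indicator {b+R..b+R+d} y"

lemma dipole_measurable [measurable]: "dipole b R d \<in> borel_measurable borel"
  unfolding dipole_def[abs_def] by measurable

lemma integrable_indicator_Icc: "integrable lborel (indicator {a..b::real} :: real \<Rightarrow> real)"
  by (rule integrable_real_indicator) (auto simp: emeasure_lborel_Icc_eq)

lemma integrable_dipole: "integrable lborel (dipole b R d)"
  unfolding dipole_def[abs_def] by (intro Bochner_Integration.integrable_diff integrable_indicator_Icc)

lemma integral_dipole: "0 \<le> d \<Longrightarrow> integral\<^sup>L lborel (dipole b R d) = 0"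
  unfolding dipole_def[abs_def] by (simp add: integrable_indicator_Icc)

lemma abs_dipole_le: "\<bar>dipole b R d y\<bar> \<le> indicator {b..b+d} y + indicator {b+R..b+R+d} y"
  by (simp add: dipole_def indicator_def)

lemma dipole_eq_0: "0 \<le> R \<Longrightarrow> y < b \<or> b + R + d < y \<Longrightarrow> dipole b R d y = 0"
  by (auto simp: dipole_def indicator_def)

lemma integrable_indicator_Icc_mult_continuous:
  fixes f :: "real \<Rightarrow> real"
  assumes "continuous_on {a..b} f"
  shows "integrable lborel (\<lambda>y. indicator {a..b} y * f y)"
  using borel_integrable_compact[OF compact_Icc assms] by (simp add: indicator_scaleR_eq_if indicator_def)

lemma
  assumes x: "x < b \<or> b + R + d < x" and "0 < R" "0 \<le> d"
  shows integrable_dipole_hilbert: "integrable lborel (\<lambda>y. dipole b R d y / (x - y))"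
    and integral_dipole_hilbert: "(\<integral>y. dipole b R d y / (x - y) \<partial>lborel)
           = (\<integral>y. indicator {b..b+d} y * (1 / (x - y) - 1 / (x - R - y)) \<partial>lborel)"
proof -
  have int: "integrable lborel (\<lambda>y. indicator {a..a+d} y * (1 / (z - y)))" if "z < a \<or> a + d < z" for a z
    using that assms(3) by (intro integrable_indicator_Icc_mult_continuous continuous_intros) auto
  have ints: "integrable lborel (\<lambda>y. indicator {b..b+d} y * (1 / (x - y)))"
    "integrable lborel (\<lambda>y. indicator {b+R..b+R+d} y * (1 / (x - y)))"
    "integrable lborel (\<lambda>y. indicator {b..b+d} y * (1 / (x - R - y)))"
    by (rule int, use x assms(2,3) in linarith)+
  have shift: "(\<integral>y. indicator {b+R..b+R+d} y * (1 / (x - y)) \<partial>lborel)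
      = (\<integral>y. indicator {b..b+d} y * (1 / (x - R - y)) \<partial>lborel)"
    using lborel_integral_real_affine[of 1 "\<lambda>y. indicator {b+R..b+R+d} y * (1 / (x - y))" R]
    by (simp add: indicator_def algebra_simps)
  have eq: "dipole b R d y / (x - y)
      = indicator {b..b+d} y * (1 / (x - y)) - indicator {b+R..b+R+d} y * (1 / (x - y))" for y
    by (simp add: dipole_def diff_divide_distrib)
  show "integrable lborel (\<lambda>y. dipole b R d y / (x - y))"
    unfolding eq using ints by simp
  show "(\<integral>y. dipole b R d y / (x - y) \<partial>lborel)
           = (\<integral>y. indicator {b..b+d} y * (1 / (x - y) - 1 / (x - R - y)) \<partial>lborel)"
    unfolding eq using ints shift by (simp add: right_diff_distrib)
qed

lemma integral_dipole_hilbert_nonpos: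
  assumes x: "x < b \<or> b + R + d < x" and R: "0 < R" and "0 \<le> d"
  shows "(\<integral>y. dipole b R d y / (x - y) \<partial>lborel) \<le> 0"
proof -
  have "1 / (x - y) - 1 / (x - R - y) \<le> 0" if "y \<in> {b..b+d}" for y
  proof (cases "x < y")
    case True
    then have "0 < (x - y) * (x - R - y)"
      using R by (intro mult_neg_neg) auto
    moreover have "1 / (x - y) - 1 / (x - R - y) = - (R / ((x - y) * (x - R - y)))"
      using True R by (simp add: field_simps)
    ultimately show ?thesis
      using R by simp
  next
    case False
    then have "0 < x - R - y"
      using x that by auto
    then have "1 / (x - y) \<le> 1 / (x - R - y)"
      using R by (intro frac_le) auto
    then show ?thesis
      by simp
  qed
  then have "0 \<le> (\<integral>y. - (indicator {b..b+d} y * (1 / (x - y) - 1 / (x - R - y))) \<partial>lborel)"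
    by (intro Bochner_Integration.integral_nonneg) (auto simp: indicator_def)
  then show ?thesis
    using integral_dipole_hilbert[OF assms] by simp
qed

lemma integral_dipole_hilbert_le:
  assumes R: "0 < R" and d: "0 < d" "d \<le> b - x" and u: "b + d - x \<le> R"
  shows "(\<integral>y. dipole b R d y / (x - y) \<partial>lborel) \<le> - d / (2 * (b + d - x))"
proof -
  define u where "u = b + d - x"
  have "1 / (x - y) - 1 / (x - R - y) \<le> - 1 / (2 * u)" if "y \<in> {b..b+d}" for y
  proof -
    have v: "0 < y - x" "y - x \<le> u" "u \<le> R"
      using that d u by (auto simp: u_def)
    then have "(y - x) * (y - x + R) \<le> u * (2 * R)"
      by (intro mult_mono) auto
    then have "1 / (2 * u) \<le> R / ((y - x) * (y - x + R))"
      using v R by (simp add: divide_simps) (simp add: algebra_simps)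
    moreover have "1 / (x - y) - 1 / (x - R - y) = - (R / ((y - x) * (y - x + R)))"
      using v R by (simp add: field_simps)
    ultimately show ?thesis
      by simp
  qed
  then have "(\<integral>y. indicator {b..b+d} y * (1 / (x - y) - 1 / (x - R - y)) \<partial>lborel)
      \<le> (\<integral>y. indicator {b..b+d} y * (- 1 / (2 * u)) \<partial>lborel)"
    using R d
    by (intro integral_mono integrable_indicator_Icc_mult_continuous continuous_intros)
       (auto simp: indicator_def)
  also have "\<dots> = - d / (2 * u)"
    using d by simp
  finally show ?thesis
    using integral_dipole_hilbert[of x b R d] assms by (simp add: u_def)
qed

section \<open>The construction\<close>

text \<open>
  In the notation above, l = cell_len n, N = num_dipoles n, R = dipole_gap n,
  d = bump_width n and h = bump_height n; the dipoles of layer n sit at the points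
  b = dipole_pos n i, one in each of the N subintervals of length l/N = dipole_step n
  of [cell_start n, cell_start (Suc n)].
\<close>

definition cell_start :: "nat \<Rightarrow> real" where
  "cell_start n = 1 - (1/2)^n"

definition cell_len :: "nat \<Rightarrow> real" where
  "cell_len n = (1/2)^(n+1)"

definition num_dipoles :: "nat \<Rightarrow> nat" where
  "num_dipoles n = 2 ^ 4 ^ (n+1)"

definition dipole_step :: "nat \<Rightarrow> real" where
  "dipole_step n = cell_len n / num_dipoles n"

definition dipole_gap :: "nat \<Rightarrow> real" where
  "dipole_gap n = dipole_step n / 4"

definition bump_width :: "nat \<Rightarrow> real" where
  "bump_width n = dipole_gap n / num_dipoles n"

definition bump_height :: "nat \<Rightarrow> real" where
  "bump_height n = 4 * cell_len n * num_dipoles n"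

definition dipole_pos :: "nat \<Rightarrow> nat \<Rightarrow> real" where
  "dipole_pos n i = cell_start n + real i * dipole_step n + 2 * dipole_gap n"

definition layer :: "nat \<Rightarrow> real \<Rightarrow> real" where
  "layer n y = (\<Sum>i<num_dipoles n. bump_height n * dipole (dipole_pos n i) (dipole_gap n) (bump_width n) y)"

definition Omega :: "real \<Rightarrow> real" where
  "Omega y = (\<Sum>n. layer n y)"

lemma num_dipoles_ge_2: "2 \<le> num_dipoles n"
proof -
  have "(2::nat) ^ 1 \<le> 2 ^ 4 ^ (n+1)"
    by (intro power_increasing) auto
  then show ?thesis
    by (simp add: num_dipoles_def)
qed

lemma parameters_pos:
  shows cell_len_pos: "0 < cell_len n"
    and dipole_step_pos: "0 < dipole_step n"
    and dipole_gap_pos: "0 < dipole_gap n"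
    and bump_width_pos: "0 < bump_width n"
    and bump_height_pos: "0 < bump_height n"
  using num_dipoles_ge_2[of n]
  by (simp_all add: cell_len_def dipole_step_def dipole_gap_def bump_width_def bump_height_def)

lemma two_bump_width_le_gap: "2 * bump_width n \<le> dipole_gap n"
proof -
  have "dipole_gap n * 2 \<le> dipole_gap n * num_dipoles n"
    using num_dipoles_ge_2[of n] dipole_gap_pos[of n] by (intro mult_left_mono) auto
  then show ?thesis
    using num_dipoles_ge_2[of n] by (simp add: bump_width_def field_simps)
qed

lemma cell_len_le: "cell_len n \<le> 1/2"
  by (simp add: cell_len_def power_le_one)

lemma two_bump_width_le_step: "2 * bump_width n \<le> dipole_step n"
  using two_bump_width_le_gap[of n] dipole_gap_pos[of n] by (simp add: dipole_gap_def)

lemma num_dipoles_mult_step: "num_dipoles n * dipole_step n = cell_len n"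
  using num_dipoles_ge_2[of n] by (simp add: dipole_step_def)

lemma bump_height_mult_width: "bump_height n * bump_width n = cell_len n ^ 2 / num_dipoles n"
  using num_dipoles_ge_2[of n]
  by (simp add: bump_height_def bump_width_def dipole_gap_def dipole_step_def power2_eq_square field_simps)

lemma cell_start_Suc: "cell_start (Suc n) = cell_start n + cell_len n"
  by (simp add: cell_start_def cell_len_def)

lemma cell_start_mono: "n \<le> m \<Longrightarrow> cell_start n \<le> cell_start m"
  by (simp add: cell_start_def power_decreasing)

lemma cell_start_bounds: "0 \<le> cell_start n" "cell_start n < 1"
  by (simp_all add: cell_start_def power_le_one)

lemma dipole_pos_ge: "cell_start n + 2 * dipole_gap n \<le> dipole_pos n i"
  using dipole_step_pos[of n] by (simp add: dipole_pos_def)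

lemma dipole_pos_le:
  assumes "i < num_dipoles n"
  shows "dipole_pos n i + 2 * dipole_gap n \<le> cell_start (Suc n)"
proof -
  have "(real i + 1) * dipole_step n \<le> num_dipoles n * dipole_step n"
    using assms dipole_step_pos[of n] by (intro mult_right_mono) auto
  then show ?thesis
    using num_dipoles_mult_step[of n]
    by (simp add: dipole_pos_def cell_start_Suc dipole_gap_def algebra_simps)
qed

lemma dipole_pos_less: "i < j \<Longrightarrow> dipole_pos n i + dipole_step n \<le> dipole_pos n j"
  using dipole_step_pos[of n] mult_right_mono[of "real i + 1" "real j" "dipole_step n"]
  by (simp add: dipole_pos_def algebra_simps)

lemma layer_nonzero:
  assumes "layer n y \<noteq> 0"
  obtains i where "i < num_dipoles n" "dipole_pos n i \<le> y" "y \<le> dipole_pos n i + dipole_gap n + bump_width n"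
proof -
  obtain i where i: "i < num_dipoles n"
      and "bump_height n * dipole (dipole_pos n i) (dipole_gap n) (bump_width n) y \<noteq> 0"
    using assms unfolding layer_def by (auto elim: sum.not_neutral_contains_not_neutral)
  then have nz: "dipole (dipole_pos n i) (dipole_gap n) (bump_width n) y \<noteq> 0"
    by simp
  have "dipole_pos n i \<le> y \<and> y \<le> dipole_pos n i + dipole_gap n + bump_width n"
  proof (rule ccontr)
    assume "\<not> ?thesis"
    then have "y < dipole_pos n i \<or> dipole_pos n i + dipole_gap n + bump_width n < y"
      by linarith
    then have "dipole (dipole_pos n i) (dipole_gap n) (bump_width n) y = 0"
      by (rule dipole_eq_0[OF less_imp_le[OF dipole_gap_pos]])
    with nz show False
      by contradiction
  qed
  with i that show ?thesis
    by blast
qed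

lemma layer_support:
  assumes "layer n y \<noteq> 0"
  shows "cell_start n < y" "y < cell_start (Suc n)"
proof -
  obtain i where "i < num_dipoles n" "dipole_pos n i \<le> y"
      "y \<le> dipole_pos n i + dipole_gap n + bump_width n"
    using layer_nonzero[OF assms] .
  then show "cell_start n < y" "y < cell_start (Suc n)"
    using dipole_pos_ge[of n i] dipole_pos_le[of i n] dipole_gap_pos[of n] two_bump_width_le_gap[of n]
      bump_width_pos[of n] by linarith+
qed

lemma layer_unique: "layer n y \<noteq> 0 \<Longrightarrow> layer m y \<noteq> 0 \<Longrightarrow> n = m"
  using layer_support[of n y] layer_support[of m y] cell_start_mono[of "Suc n" m] cell_start_mono[of "Suc m" n]
  by (cases n m rule: linorder_cases) auto

lemma finite_layers_nonzero: "finite {n. layer n y \<noteq> 0}"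
proof (cases "\<exists>n. layer n y \<noteq> 0")
  case True
  then obtain n where "layer n y \<noteq> 0"
    by blast
  then have "{n. layer n y \<noteq> 0} \<subseteq> {n}"
    using layer_unique by blast
  then show ?thesis
    by (rule finite_subset) simp
qed simp

lemma Omega_eq_layer:
  assumes "layer n y \<noteq> 0"
  shows "Omega y = layer n y"
proof -
  have "Omega y = (\<Sum>m\<in>{n}. layer m y)"
    unfolding Omega_def using layer_unique[OF assms] by (intro suminf_finite) auto
  then show ?thesis
    by simp
qed

lemma Omega_nonzero:
  assumes "Omega y \<noteq> 0"
  obtains n where "layer n y \<noteq> 0" "Omega y = layer n y"
proof (cases "\<exists>n. layer n y \<noteq> 0")
  case True
  then show ?thesis
    using that Omega_eq_layer by blast
next
  case False
  with assms show ?thesis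
    by (simp add: Omega_def)
qed

lemma indicator_mult_Omega: "indicator {0..1} y * Omega y = Omega y"
proof (cases "Omega y = 0")
  case False
  then obtain n where "layer n y \<noteq> 0"
    by (rule Omega_nonzero)
  then show ?thesis
    using layer_support[of n y] cell_start_bounds(1)[of n] cell_start_bounds(2)[of "Suc n"] by simp
qed simp

lemma layer_measurable [measurable]: "layer n \<in> borel_measurable borel"
  unfolding layer_def[abs_def] by measurable

lemma integrable_layer: "integrable lborel (layer n)"
  unfolding layer_def[abs_def] by (intro Bochner_Integration.integrable_sum integrable_mult_right integrable_dipole)

lemma integral_layer: "integral\<^sup>L lborel (layer n) = 0"
  unfolding layer_def[abs_def] using bump_width_pos[of n]
  by (simp add: integrable_dipole integral_dipole)

lemma abs_layer_le:
  "\<bar>layer n y\<bar> \<le> bump_height n *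
     ((\<Sum>i<num_dipoles n. indicator {dipole_pos n i .. dipole_pos n i + bump_width n} y)
    + (\<Sum>i<num_dipoles n. indicator {dipole_pos n i + dipole_gap n .. dipole_pos n i + dipole_gap n + bump_width n} y))"
proof -
  have "\<bar>layer n y\<bar> \<le> (\<Sum>i<num_dipoles n. \<bar>bump_height n * dipole (dipole_pos n i) (dipole_gap n) (bump_width n) y\<bar>)"
    unfolding layer_def by (rule sum_abs)
  also have "\<dots> = (\<Sum>i<num_dipoles n. bump_height n * \<bar>dipole (dipole_pos n i) (dipole_gap n) (bump_width n) y\<bar>)"
    using bump_height_pos[of n] by (simp add: abs_mult)
  also have "\<dots> \<le> (\<Sum>i<num_dipoles n. bump_height n *
      (indicator {dipole_pos n i .. dipole_pos n i + bump_width n} y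
     + indicator {dipole_pos n i + dipole_gap n .. dipole_pos n i + dipole_gap n + bump_width n} y))"
    using bump_height_pos[of n] by (intro sum_mono mult_left_mono abs_dipole_le) auto
  finally show ?thesis
    by (simp add: sum.distrib sum_distrib_left distrib_left)
qed

lemma integral_abs_layer_le: "(\<integral>y. \<bar>layer n y\<bar> \<partial>lborel) \<le> 2 * cell_len n ^ 2"
proof -
  have "(\<integral>y. \<bar>layer n y\<bar> \<partial>lborel) \<le> (\<integral>y. bump_height n *
     ((\<Sum>i<num_dipoles n. indicator {dipole_pos n i .. dipole_pos n i + bump_width n} y)
    + (\<Sum>i<num_dipoles n. indicator {dipole_pos n i + dipole_gap n .. dipole_pos n i + dipole_gap n + bump_width n} y)) \<partial>lborel)"
    by (intro integral_mono abs_layer_le integrable_abs integrable_layer integrable_mult_right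
        Bochner_Integration.integrable_add Bochner_Integration.integrable_sum integrable_indicator_Icc)
  also have "\<dots> = 2 * num_dipoles n * (bump_height n * bump_width n)"
    using bump_width_pos[of n]
    by (simp add: integrable_indicator_Icc Bochner_Integration.integrable_sum integral_sum)
  also have "\<dots> = 2 * cell_len n ^ 2"
    using num_dipoles_ge_2[of n] by (simp add: bump_height_mult_width)
  finally show ?thesis .
qed

lemma summable_cell_len: "summable cell_len"
  unfolding cell_len_def by (simp add: summable_geometric)

lemma suminf_cell_len: "suminf cell_len = 1"
  unfolding cell_len_def using suminf_geometric[of "1/2::real"] summable_geometric[of "1/2::real"]
  by (simp add: suminf_divide)

lemma summable_cell_len_sq: "summable (\<lambda>n. cell_len n ^ 2)"
proof -
  have "(\<lambda>n. cell_len n ^ 2) = (\<lambda>n. 1/4 * (1/4) ^ n)"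
    by (simp add: cell_len_def power_mult_distrib[symmetric] power_mult[symmetric] power2_eq_square power_add)
  then show ?thesis
    by (simp add: summable_geometric)
qed

lemma summable_layer: "summable (\<lambda>n. layer n y)"
  by (rule summable_finite[OF finite_layers_nonzero]) auto

lemma
  shows integrable_Omega: "integrable lborel Omega"
    and integral_Omega: "integral\<^sup>L lborel Omega = 0"
proof -
  have summable_norm: "summable (\<lambda>n. norm (layer n y))" for y
    by (rule summable_finite[OF finite_layers_nonzero]) auto
  have "summable (\<lambda>n. 2 * cell_len n ^ 2)"
    by (intro summable_mult summable_cell_len_sq)
  then have summable_L1: "summable (\<lambda>n. \<integral>y. norm (layer n y) \<partial>lborel)"
    by (rule summable_comparison_test[rotated]) (auto intro: exI[of _ 0] integral_abs_layer_le)
  show "integrable lborel Omega"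
    unfolding Omega_def[abs_def] using summable_norm summable_L1
    by (intro integrable_suminf integrable_layer) auto
  have "integral\<^sup>L lborel Omega = (\<Sum>n. integral\<^sup>L lborel (layer n))"
    unfolding Omega_def[abs_def] using summable_norm summable_L1
    by (intro integral_suminf integrable_layer) auto
  then show "integral\<^sup>L lborel Omega = 0"
    by (simp add: integral_layer)
qed

section \<open>The logarithmic condition\<close>

lemma bump_height_mult_sqrt_width: "bump_height n * sqrt (bump_width n) \<le> 2 * cell_len n"
proof -
  have "sqrt (bump_width n) = sqrt (cell_len n) / (2 * num_dipoles n)"
    using num_dipoles_ge_2[of n]
    by (simp add: bump_width_def dipole_gap_def dipole_step_def real_sqrt_divide real_sqrt_mult power2_eq_square[symmetric])
  then have "bump_height n * sqrt (bump_width n) = 2 * cell_len n * sqrt (cell_len n)"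
    using num_dipoles_ge_2[of n] by (simp add: bump_height_def field_simps)
  also have "\<dots> \<le> 2 * cell_len n * 1"
    using cell_len_pos[of n] cell_len_le[of n] by (intro mult_left_mono) auto
  finally show ?thesis
    by simp
qed

lemma bump_height_mult_width_div: "bump_height n * bump_width n / (dipole_step n - bump_width n) \<le> 2 * cell_len n"
proof -
  have "bump_height n * bump_width n / (dipole_step n - bump_width n) \<le> bump_height n * bump_width n / (dipole_step n / 2)"
    using two_bump_width_le_step[of n] bump_height_pos[of n] bump_width_pos[of n] dipole_step_pos[of n]
    by (intro divide_left_mono) auto
  also have "\<dots> = 2 * cell_len n"
    using num_dipoles_ge_2[of n] cell_len_pos[of n]
    by (simp add: bump_height_mult_width dipole_step_def field_simps power2_eq_square)
  finally show ?thesis .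
qed

lemma bump_row_inv_sqrt_dist_le:
  "ennreal (bump_height n) *
     (\<Sum>i<num_dipoles n. \<integral>\<^sup>+x. indicator {c + real i * dipole_step n .. c + real i * dipole_step n + bump_width n} x
                                 * inv_sqrt_dist w x \<partial>lborel)
   \<le> ennreal (40 * cell_len n)"
proof -
  let ?P = "dipole_step n" and ?d = "bump_width n" and ?h = "bump_height n"
  have pos: "0 < ?d" "0 < ?P - ?d" "0 < ?h"
    using bump_width_pos[of n] two_bump_width_le_step[of n] bump_height_pos[of n] by linarith+
  have "(\<integral>\<^sup>+x. indicator {c - ?P .. c + real (num_dipoles n) * ?P} x * inv_sqrt_dist w x \<partial>lborel)
      \<le> 4 * sqrt 1 + emeasure lborel {c - ?P .. c + real (num_dipoles n) * ?P} * ennreal (1 powr (-1/2))"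
    by (rule nn_integral_inv_sqrt_dist_le) auto
  also have "\<dots> = 4 + ennreal (cell_len n + ?P)"
    using num_dipoles_mult_step[of n] dipole_step_pos[of n] cell_len_pos[of n]
    by (simp add: algebra_simps emeasure_lborel_Icc_eq)
  also have "\<dots> \<le> 4 + ennreal 1"
    using num_dipoles_mult_step[of n] num_dipoles_ge_2[of n] dipole_step_pos[of n] cell_len_le[of n]
      mult_right_mono[of 1 "real (num_dipoles n)" ?P]
    by (intro add_left_mono ennreal_leI) auto
  also have "\<dots> = ennreal 5"
    by simp
  finally have hull: "(\<integral>\<^sup>+x. indicator {c - ?P .. c + real (num_dipoles n) * ?P} x * inv_sqrt_dist w x \<partial>lborel)
      \<le> ennreal 5" .
  have "ennreal ?h * (\<Sum>i<num_dipoles n. \<integral>\<^sup>+x. indicator {c + real i * ?P .. c + real i * ?P + ?d} x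
                                 * inv_sqrt_dist w x \<partial>lborel)
      \<le> ennreal ?h * (ennreal (10 * sqrt ?d) + ennreal (2 * ?d / (?P - ?d)) * ennreal 5)"
    using two_bump_width_le_step[of n] pos
    by (intro mult_left_mono order_trans[OF nn_integral_inv_sqrt_dist_progression] add_mono hull) auto
  also have "\<dots> = ennreal (10 * (?h * sqrt ?d) + 10 * (?h * ?d / (?P - ?d)))"
    using pos by (simp add: ennreal_mult[symmetric] ennreal_plus[symmetric] algebra_simps
        del: ennreal_plus ennreal_numeral)
  also have "\<dots> \<le> ennreal (40 * cell_len n)"
    using bump_height_mult_sqrt_width[of n] bump_height_mult_width_div[of n] by (intro ennreal_leI) auto
  finally show ?thesis .
qed

lemma nn_integral_abs_layer_inv_sqrt_dist:
  "(\<integral>\<^sup>+x. ennreal \<bar>layer n x\<bar> * inv_sqrt_dist w x \<partial>lborel) \<le> ennreal (80 * cell_len n)"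
proof -
  let ?I = "\<lambda>c i. {c + real i * dipole_step n .. c + real i * dipole_step n + bump_width n}"
  let ?start_pos = "cell_start n + 2 * dipole_gap n" and ?start_neg = "cell_start n + 3 * dipole_gap n"
  let ?row = "\<lambda>c x. (\<Sum>i<num_dipoles n. indicator (?I c i) x * inv_sqrt_dist w x)"
  have "ennreal \<bar>layer n x\<bar> * inv_sqrt_dist w x \<le> ennreal (bump_height n) * (?row ?start_pos x + ?row ?start_neg x)" for x
  proof -
    have "ennreal \<bar>layer n x\<bar> \<le> ennreal (bump_height n *
        ((\<Sum>i<num_dipoles n. indicator (?I ?start_pos i) x) + (\<Sum>i<num_dipoles n. indicator (?I ?start_neg i) x)))"
      using abs_layer_le[of n x] by (intro ennreal_leI) (simp add: dipole_pos_def algebra_simps)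
    also have "\<dots> = ennreal (bump_height n) *
        ((\<Sum>i<num_dipoles n. indicator (?I ?start_pos i) x) + (\<Sum>i<num_dipoles n. indicator (?I ?start_neg i) x))"
      using bump_height_pos[of n]
      by (simp add: ennreal_mult ennreal_plus sum_nonneg flip: sum_ennreal) (simp add: ennreal_indicator)
    finally show ?thesis
      by (rule mult_right_mono[THEN order_trans])
         (simp_all add: sum_distrib_right distrib_left distrib_right mult.assoc)
  qed
  then have "(\<integral>\<^sup>+x. ennreal \<bar>layer n x\<bar> * inv_sqrt_dist w x \<partial>lborel)
      \<le> (\<integral>\<^sup>+x. ennreal (bump_height n) * (?row ?start_pos x + ?row ?start_neg x) \<partial>lborel)"
    by (rule nn_integral_mono)
  also have "\<dots> = ennreal (bump_height n) * ((\<Sum>i<num_dipoles n. \<integral>\<^sup>+x. indicator (?I ?start_pos i) x * inv_sqrt_dist w x \<partial>lborel)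
      + (\<Sum>i<num_dipoles n. \<integral>\<^sup>+x. indicator (?I ?start_neg i) x * inv_sqrt_dist w x \<partial>lborel))"
    by (subst nn_integral_cmult, measurable, subst nn_integral_add, measurable, subst (1 2) nn_integral_sum) auto
  also have "\<dots> \<le> ennreal (40 * cell_len n) + ennreal (40 * cell_len n)"
    unfolding distrib_left by (intro add_mono bump_row_inv_sqrt_dist_le)
  also have "\<dots> = ennreal (80 * cell_len n)"
    using cell_len_pos[of n] by (simp flip: ennreal_plus)
  finally show ?thesis .
qed

lemma nn_integral_abs_Omega_inv_sqrt_dist:
  "(\<integral>\<^sup>+x. ennreal \<bar>Omega x\<bar> * inv_sqrt_dist w x \<partial>lborel) \<le> 80"
proof -
  have "ennreal \<bar>Omega x\<bar> * inv_sqrt_dist w x \<le> (\<Sum>n. ennreal \<bar>layer n x\<bar> * inv_sqrt_dist w x)" for x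
  proof (cases "Omega x = 0")
    case False
    then obtain n where "Omega x = layer n x"
      by (rule Omega_nonzero)
    moreover have "(\<Sum>m\<in>{n}. ennreal \<bar>layer m x\<bar> * inv_sqrt_dist w x) \<le> (\<Sum>m. ennreal \<bar>layer m x\<bar> * inv_sqrt_dist w x)"
      by (rule sum_le_suminf) auto
    ultimately show ?thesis
      by simp
  qed simp
  then have "(\<integral>\<^sup>+x. ennreal \<bar>Omega x\<bar> * inv_sqrt_dist w x \<partial>lborel)
      \<le> (\<integral>\<^sup>+x. (\<Sum>n. ennreal \<bar>layer n x\<bar> * inv_sqrt_dist w x) \<partial>lborel)"
    by (rule nn_integral_mono)
  also have "\<dots> = (\<Sum>n. \<integral>\<^sup>+x. ennreal \<bar>layer n x\<bar> * inv_sqrt_dist w x \<partial>lborel)"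
    by (rule nn_integral_suminf) measurable
  also have "\<dots> \<le> (\<Sum>n. ennreal (80 * cell_len n))"
    by (intro suminf_le nn_integral_abs_layer_inv_sqrt_dist) auto
  also have "\<dots> = ennreal (\<Sum>n. 80 * cell_len n)"
    using cell_len_pos by (intro suminf_ennreal2 summable_mult summable_cell_len less_imp_le) auto
  also have "\<dots> = 80"
    by (simp add: suminf_mult summable_cell_len suminf_cell_len)
  finally show ?thesis .
qed

lemma Omega_log_condition:
  fixes \<alpha> :: real
  assumes "0 < \<alpha>"
  shows "(SUP t\<in>{0..1}. \<integral>\<^sup>+ x\<in>{0..1}.
            ennreal (\<bar>Omega x\<bar> * (ln (1 / \<bar>cos (2 * pi * (x - t))\<bar>)) powr (1 + \<alpha>)) \<partial>lborel) < \<infinity>"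
proof -
  define C where "C = (2 * (1 + \<alpha>)) powr (1 + \<alpha>)"
  define z where "z k = (2 * real_of_int k + 1) / 4" for k :: int
  have bound: "(\<integral>\<^sup>+ x\<in>{0..1}. ennreal (\<bar>Omega x\<bar> * (ln (1 / \<bar>cos (2 * pi * (x - t))\<bar>)) powr (1 + \<alpha>)) \<partial>lborel)
      \<le> ennreal C * (\<Sum>k\<in>{-2..2::int}. 80)" if "t \<in> {0..1}" for t
  proof -
    have "ennreal (\<bar>Omega x\<bar> * (ln (1 / \<bar>cos (2 * pi * (x - t))\<bar>)) powr (1 + \<alpha>)) * indicator {0..1} x
        \<le> ennreal C * (\<Sum>k\<in>{-2..2}. ennreal \<bar>Omega x\<bar> * inv_sqrt_dist (t + z k) x)" for x
    proof (cases "x \<in> {0..1}")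
      case True
      have "\<bar>Omega x\<bar> * (ln (1 / \<bar>cos (2 * pi * (x - t))\<bar>)) powr (1 + \<alpha>)
          \<le> (\<Sum>k\<in>{-2..2}. C * (\<bar>Omega x\<bar> * \<bar>x - (t + z k)\<bar> powr (-1/2)))"
        using mult_left_mono[OF ln_inverse_abs_cos_powr_le_sum[of "1 + \<alpha>" x t], of "\<bar>Omega x\<bar>"] assms True that
        by (simp add: C_def z_def sum_distrib_left algebra_simps)
      then have "ennreal (\<bar>Omega x\<bar> * (ln (1 / \<bar>cos (2 * pi * (x - t))\<bar>)) powr (1 + \<alpha>))
          \<le> (\<Sum>k\<in>{-2..2}. ennreal (C * (\<bar>Omega x\<bar> * \<bar>x - (t + z k)\<bar> powr (-1/2))))"
        by (subst sum_ennreal) (auto simp: C_def intro: ennreal_leI)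
      also have "\<dots> = ennreal C * (\<Sum>k\<in>{-2..2}. ennreal \<bar>Omega x\<bar> * inv_sqrt_dist (t + z k) x)"
        by (simp add: C_def inv_sqrt_dist_def sum_distrib_left ennreal_mult)
      finally show ?thesis
        using True by simp
    qed simp
    then have "(\<integral>\<^sup>+ x\<in>{0..1}. ennreal (\<bar>Omega x\<bar> * (ln (1 / \<bar>cos (2 * pi * (x - t))\<bar>)) powr (1 + \<alpha>)) \<partial>lborel)
        \<le> (\<integral>\<^sup>+ x. ennreal C * (\<Sum>k\<in>{-2..2}. ennreal \<bar>Omega x\<bar> * inv_sqrt_dist (t + z k) x) \<partial>lborel)"
      by (rule nn_integral_mono)
    also have "\<dots> = ennreal C * (\<Sum>k\<in>{-2..2}. \<integral>\<^sup>+ x. ennreal \<bar>Omega x\<bar> * inv_sqrt_dist (t + z k) x \<partial>lborel)"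
      using integrable_Omega by (simp add: nn_integral_cmult nn_integral_sum)
    also have "\<dots> \<le> ennreal C * (\<Sum>k\<in>{-2..2::int}. 80)"
      by (intro mult_left_mono sum_mono nn_integral_abs_Omega_inv_sqrt_dist) auto
    finally show ?thesis .
  qed
  have "(SUP t\<in>{0..1}. \<integral>\<^sup>+ x\<in>{0..1}.
            ennreal (\<bar>Omega x\<bar> * (ln (1 / \<bar>cos (2 * pi * (x - t))\<bar>)) powr (1 + \<alpha>)) \<partial>lborel)
      \<le> ennreal C * (\<Sum>k\<in>{-2..2::int}. 80)"
    by (rule SUP_least) (rule bound)
  also have "\<dots> < \<infinity>"
    by (simp add: ennreal_mult_less_top)
  finally show ?thesis .
qed

section \<open>The Hilbert transform is not integrable\<close>

definition window :: "nat \<Rightarrow> nat \<Rightarrow> real set" where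
  "window n i = {dipole_pos n i - dipole_gap n + bump_width n .. dipole_pos n i - bump_width n}"

lemma window_measurable [measurable]: "window n i \<in> sets borel"
  by (simp add: window_def)

lemma window_dipole_sep:
  assumes x: "x \<in> window n i" and i: "i < num_dipoles n" and j: "j < num_dipoles m"
  shows "dipole_pos n i \<le> dipole_pos m j
         \<or> dipole_pos m j + dipole_gap m + bump_width m \<le> 2 * x - dipole_pos n i"
proof -
  have x1: "dipole_pos n i - dipole_gap n + bump_width n \<le> x"
    using x by (simp add: window_def)
  have d: "0 < bump_width n" "0 < bump_width m" "2 * bump_width m \<le> dipole_gap m" "0 < dipole_gap n"
    using bump_width_pos two_bump_width_le_gap dipole_gap_pos by auto
  consider "m = n" | "m < n" | "n < m"
    by linarith
  then show ?thesis
  proof cases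
    case 1
    then show ?thesis
      using dipole_pos_less[of j i n] dipole_pos_less[of i j n] x1 d
      by (cases i j rule: linorder_cases) (auto simp: dipole_gap_def)
  next
    case 2
    then have "cell_start (Suc m) \<le> cell_start n"
      by (intro cell_start_mono) simp
    then show ?thesis
      using dipole_pos_le[OF j] dipole_pos_ge[of n i] x1 d by linarith
  next
    case 3
    then have "cell_start (Suc n) \<le> cell_start m"
      by (intro cell_start_mono) simp
    then show ?thesis
      using dipole_pos_le[OF i] dipole_pos_ge[of m j] dipole_gap_pos[of n] dipole_gap_pos[of m] by linarith
  qed
qed

lemma window_outside_dipole:
  assumes "x \<in> window n i" "i < num_dipoles n" "j < num_dipoles m"
  shows "x < dipole_pos m j \<or> dipole_pos m j + dipole_gap m + bump_width m < x"
  using window_dipole_sep[OF assms] assms(1) bump_width_pos[of n] by (auto simp: window_def)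

lemma window_dist_layer:
  assumes "x \<in> window n i" "i < num_dipoles n" "layer m y \<noteq> 0"
  shows "dipole_pos n i - x \<le> \<bar>x - y\<bar>"
proof -
  obtain j where "j < num_dipoles m" "dipole_pos m j \<le> y"
      "y \<le> dipole_pos m j + dipole_gap m + bump_width m"
    using layer_nonzero[OF assms(3)] .
  then show ?thesis
    using window_dipole_sep[OF assms(1,2)] by fastforce
qed

lemma window_dist_Omega:
  assumes "x \<in> window n i" "i < num_dipoles n" "Omega y \<noteq> 0"
  shows "dipole_pos n i - x \<le> \<bar>x - y\<bar>"
proof -
  obtain m where "layer m y \<noteq> 0" "Omega y = layer m y"
    using assms(3) by (rule Omega_nonzero)
  then show ?thesis
    using window_dist_layer[OF assms(1,2)] by blast
qed

lemma window_disjoint: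
  assumes x: "x \<in> window n i" "x \<in> window m j" and ij: "i < num_dipoles n" "j < num_dipoles m"
  shows "n = m \<and> i = j"
proof -
  have "dipole_pos n i = dipole_pos m j"
    using window_dipole_sep[OF x(1) ij] window_dipole_sep[OF x(2) ij(2,1)] x
      bump_width_pos[of n] bump_width_pos[of m] dipole_gap_pos[of n] dipole_gap_pos[of m]
    by (auto simp: window_def)
  moreover have "n = m"
  proof (rule ccontr)
    assume "n \<noteq> m"
    then have "cell_start (Suc n) \<le> cell_start m \<or> cell_start (Suc m) \<le> cell_start n"
      by (cases n m rule: linorder_cases) (auto intro: cell_start_mono)
    then show False
      using \<open>dipole_pos n i = dipole_pos m j\<close> dipole_pos_le[OF ij(1)] dipole_pos_le[OF ij(2)]
        dipole_pos_ge[of n i] dipole_pos_ge[of m j] dipole_gap_pos[of n] dipole_gap_pos[of m]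
      by linarith
  qed
  moreover have "i = j"
    using calculation dipole_pos_less[of i j n] dipole_pos_less[of j i n] dipole_step_pos[of n]
    by (cases i j rule: linorder_cases) auto
  ultimately show ?thesis
    by blast
qed

lemma
  assumes x: "x \<in> window n i" and i: "i < num_dipoles n"
  shows integrable_layer_hilbert: "integrable lborel (\<lambda>y. layer m y / (x - y))"
    and integral_layer_hilbert_nonpos: "(\<integral>y. layer m y / (x - y) \<partial>lborel) \<le> 0"
proof -
  let ?D = "\<lambda>j y. dipole (dipole_pos m j) (dipole_gap m) (bump_width m) y / (x - y)"
  have eq: "layer m y / (x - y) = (\<Sum>j<num_dipoles m. bump_height m * ?D j y)" for y
    by (simp add: layer_def sum_divide_distrib)
  have out: "x < dipole_pos m j \<or> dipole_pos m j + dipole_gap m + bump_width m < x" if "j < num_dipoles m" for j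
    using window_outside_dipole[OF x i that] .
  have int: "integrable lborel (\<lambda>y. bump_height m * ?D j y)" if "j \<in> {..<num_dipoles m}" for j
    using out[of j] that dipole_gap_pos[of m] bump_width_pos[of m]
    by (intro integrable_mult_right integrable_dipole_hilbert) auto
  show "integrable lborel (\<lambda>y. layer m y / (x - y))"
    unfolding eq by (rule Bochner_Integration.integrable_sum[OF int])
  have "(\<integral>y. layer m y / (x - y) \<partial>lborel) = (\<Sum>j<num_dipoles m. bump_height m * (\<integral>y. ?D j y \<partial>lborel))"
    unfolding eq by (simp only: Bochner_Integration.integral_sum[OF int] integral_mult_right_zero)
  also have "\<dots> \<le> 0"
    using out bump_height_pos[of m] dipole_gap_pos[of m] bump_width_pos[of m]
    by (intro sum_nonpos mult_nonneg_nonpos integral_dipole_hilbert_nonpos) auto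
  finally show "(\<integral>y. layer m y / (x - y) \<partial>lborel) \<le> 0" .
qed

lemma integral_layer_hilbert_le:
  assumes x: "x \<in> window n i" and i: "i < num_dipoles n"
  shows "(\<integral>y. layer n y / (x - y) \<partial>lborel)
           \<le> - (bump_height n * bump_width n) / (2 * (dipole_pos n i + bump_width n - x))"
proof -
  let ?D = "\<lambda>j y. dipole (dipole_pos n j) (dipole_gap n) (bump_width n) y / (x - y)"
  have eq: "layer n y / (x - y) = (\<Sum>j<num_dipoles n. bump_height n * ?D j y)" for y
    by (simp add: layer_def sum_divide_distrib)
  have out: "x < dipole_pos n j \<or> dipole_pos n j + dipole_gap n + bump_width n < x" if "j < num_dipoles n" for j
    using window_outside_dipole[OF x i that] .
  have int: "integrable lborel (\<lambda>y. bump_height n * ?D j y)" if "j \<in> {..<num_dipoles n}" for j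
    using out[of j] that dipole_gap_pos[of n] bump_width_pos[of n]
    by (intro integrable_mult_right integrable_dipole_hilbert) auto
  have "(\<integral>y. layer n y / (x - y) \<partial>lborel) = (\<Sum>j<num_dipoles n. bump_height n * (\<integral>y. ?D j y \<partial>lborel))"
    unfolding eq by (simp only: Bochner_Integration.integral_sum[OF int] integral_mult_right_zero)
  also have "\<dots> = bump_height n * (\<integral>y. ?D i y \<partial>lborel)
      + (\<Sum>j\<in>{..<num_dipoles n} - {i}. bump_height n * (\<integral>y. ?D j y \<partial>lborel))"
    using i by (subst sum.remove[of _ i]) auto
  also have "\<dots> \<le> bump_height n * (- bump_width n / (2 * (dipole_pos n i + bump_width n - x))) + 0"
    using x out bump_height_pos[of n] dipole_gap_pos[of n] bump_width_pos[of n]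
    by (intro add_mono mult_left_mono sum_nonpos mult_nonneg_nonpos integral_dipole_hilbert_le
        integral_dipole_hilbert_nonpos) (auto simp: window_def)
  finally show ?thesis
    by simp
qed

lemma Omega_hilbert_sums:
  assumes x: "x \<in> window n i" and i: "i < num_dipoles n"
  shows "(\<lambda>m. \<integral>y. layer m y / (x - y) \<partial>lborel) sums (\<integral>y. Omega y / (x - y) \<partial>lborel)"
proof -
  define D where "D = dipole_pos n i - x"
  have D: "0 < D"
    using x bump_width_pos[of n] by (simp add: D_def window_def)
  define f where "f m y = layer m y / (x - y)" for m y
  have int: "integrable lborel (f m)" for m
    unfolding f_def using x i by (rule integrable_layer_hilbert)
  have L1: "(\<integral>y. \<bar>f m y\<bar> \<partial>lborel) \<le> 2 * cell_len m ^ 2 / D" for m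
  proof -
    have "\<bar>f m y\<bar> \<le> \<bar>layer m y\<bar> / D" for y
    proof (cases "layer m y = 0")
      case False
      then show ?thesis
        using window_dist_layer[OF x i False] D by (simp add: f_def D_def abs_div frac_le)
    qed (simp add: f_def)
    then have "(\<integral>y. \<bar>f m y\<bar> \<partial>lborel) \<le> (\<integral>y. \<bar>layer m y\<bar> / D \<partial>lborel)"
      by (intro integral_mono integrable_abs int integrable_divide integrable_abs integrable_layer)
    also have "\<dots> \<le> 2 * cell_len m ^ 2 / D"
      using D integral_abs_layer_le[of m] by (simp add: divide_right_mono)
    finally show ?thesis .
  qed
  have "summable (\<lambda>m. 2 * cell_len m ^ 2 / D)"
    by (intro summable_divide summable_mult summable_cell_len_sq)
  then have summable_L1: "summable (\<lambda>m. \<integral>y. norm (f m y) \<partial>lborel)"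
    by (rule summable_comparison_test[rotated]) (auto intro: exI[of _ 0] L1)
  have summable_norm: "summable (\<lambda>m. norm (f m y))" for y
    by (rule summable_finite[OF finite_layers_nonzero[of y]]) (auto simp: f_def)
  have "Omega y / (x - y) = (\<Sum>m. f m y)" for y
    unfolding Omega_def f_def using summable_layer by (rule suminf_divide[symmetric])
  moreover have "(\<lambda>m. integral\<^sup>L lborel (f m)) sums (\<integral>y. (\<Sum>m. f m y) \<partial>lborel)"
    by (rule sums_integral[OF int]) (use summable_norm summable_L1 in auto)
  ultimately show ?thesis
    by (simp add: f_def[abs_def])
qed

lemma sums_le_term_if_nonpos:
  fixes f :: "nat \<Rightarrow> real"
  assumes "f sums s" "\<And>m. f m \<le> 0"
  shows "s \<le> f n"
proof -
  have "(\<Sum>m\<in>{n}. - f m) \<le> (\<Sum>m. - f m)"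
    using assms by (intro sum_le_suminf summable_minus sums_summable[OF assms(1)]) auto
  moreover have "s = suminf f"
    using assms(1) by (rule sums_unique)
  ultimately show ?thesis
    using sums_summable[OF assms(1)] by (simp add: suminf_minus)
qed

lemma integral_Omega_hilbert_le:
  assumes x: "x \<in> window n i" and i: "i < num_dipoles n"
  shows "(\<integral>y. Omega y / (x - y) \<partial>lborel)
           \<le> - (bump_height n * bump_width n) / (2 * (dipole_pos n i + bump_width n - x))"
proof -
  have "(\<integral>y. Omega y / (x - y) \<partial>lborel) \<le> (\<integral>y. layer n y / (x - y) \<partial>lborel)"
    using Omega_hilbert_sums[OF x i] integral_layer_hilbert_nonpos[OF x i] by (rule sums_le_term_if_nonpos)
  also have "\<dots> \<le> - (bump_height n * bump_width n) / (2 * (dipole_pos n i + bump_width n - x))"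
    using x i by (rule integral_layer_hilbert_le)
  finally show ?thesis .
qed

lemma trunc_hilbert_Omega_tendsto:
  assumes x: "x \<in> window n i" and i: "i < num_dipoles n"
  shows "((\<lambda>\<epsilon>. trunc_hilbert (\<lambda>y. indicator {0..1} y * Omega y) \<epsilon> x)
           \<longlongrightarrow> (1 / pi) * (\<integral>y. Omega y / (x - y) \<partial>lborel)) (at_right 0)"
proof (rule Lim_transform_eventually[OF tendsto_const])
  have D: "0 < dipole_pos n i - x"
    using x bump_width_pos[of n] by (simp add: window_def)
  show "\<forall>\<^sub>F \<epsilon> in at_right 0. (1 / pi) * (\<integral>y. Omega y / (x - y) \<partial>lborel)
          = trunc_hilbert (\<lambda>y. indicator {0..1} y * Omega y) \<epsilon> x"
    using eventually_at_right_real[OF D]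
  proof eventually_elim
    case (elim \<epsilon>)
    have "(LINT y:{y. \<epsilon> < \<bar>x - y\<bar>}|lborel. indicator {0..1} y * Omega y / (x - y))
        = (\<integral>y. Omega y / (x - y) \<partial>lborel)"
      unfolding set_lebesgue_integral_def
    proof (intro Bochner_Integration.integral_cong refl)
      fix y
      show "indicator {y. \<epsilon> < \<bar>x - y\<bar>} y *\<^sub>R (indicator {0..1} y * Omega y / (x - y)) = Omega y / (x - y)"
      proof (cases "Omega y = 0")
        case False
        then have "\<epsilon> < \<bar>x - y\<bar>"
          using window_dist_Omega[OF x i False] elim by simp
        then show ?thesis
          by (simp add: indicator_mult_Omega)
      qed simp
    qed
    then show ?case
      by (simp add: trunc_hilbert_def)
  qed
qed

lemma nn_integral_inverse_dist_Icc:
  fixes b c d R :: real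
  assumes "0 < d" "2 * d \<le> R" "0 \<le> c"
  shows "(\<integral>\<^sup>+x. ennreal (c / (b + d - x)) * indicator {b - R + d .. b - d} x \<partial>lborel)
           = ennreal (c * ln (R / (2 * d)))"
proof -
  define F where "F x = - c * ln (b + d - x)" for x
  have "((\<lambda>x. c / (b + d - x)) has_integral (F (b - d) - F (b - R + d))) {b - R + d .. b - d}"
  proof (rule fundamental_theorem_of_calculus)
    show "b - R + d \<le> b - d"
      using assms by simp
    fix x assume "x \<in> {b - R + d .. b - d}"
    then have "0 < b + d - x"
      using assms by auto
    then have "(F has_real_derivative (- c * (1 / (b + d - x) * (0 + 0 - 1)))) (at x within {b - R + d .. b - d})"
      unfolding F_def by (intro derivative_eq_intros) auto
    then show "(F has_vector_derivative c / (b + d - x)) (at x within {b - R + d .. b - d})"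
      by (simp add: has_real_derivative_iff_has_vector_derivative[symmetric])
  qed
  moreover have "F (b - d) - F (b - R + d) = c * ln (R / (2 * d))"
    unfolding F_def using assms by (simp add: ln_div algebra_simps)
  ultimately have "((\<lambda>x. c / (b + d - x)) has_integral (c * ln (R / (2 * d)))) {b - R + d .. b - d}"
    by simp
  from nn_integral_has_integral_lebesgue'[OF _ this] show ?thesis
    using assms by auto
qed

definition hilbert_minorant :: "nat \<Rightarrow> nat \<Rightarrow> real \<Rightarrow> ennreal" where
  "hilbert_minorant n i x =
     ennreal (bump_height n * bump_width n / (2 * pi) / (dipole_pos n i + bump_width n - x)) * indicator (window n i) x"

lemma hilbert_minorant_measurable [measurable]: "hilbert_minorant n i \<in> borel_measurable borel"
  unfolding hilbert_minorant_def[abs_def] by measurable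

lemma hilbert_minorant_le:
  assumes lim: "((\<lambda>\<epsilon>. trunc_hilbert (\<lambda>y. indicator {0..1} y * Omega y) \<epsilon> x) \<longlongrightarrow> g) (at_right 0)"
    and x: "x \<in> window n i" and i: "i < num_dipoles n"
  shows "hilbert_minorant n i x \<le> ennreal \<bar>g\<bar>"
proof -
  have g: "g = (1 / pi) * (\<integral>y. Omega y / (x - y) \<partial>lborel)"
    using tendsto_unique[OF _ lim trunc_hilbert_Omega_tendsto[OF x i]] by simp
  define u where "u = dipole_pos n i + bump_width n - x"
  have "bump_height n * bump_width n / (2 * pi) / u = (1 / pi) * (bump_height n * bump_width n / (2 * u))"
    by simp
  also have "\<dots> \<le> (1 / pi) * - (\<integral>y. Omega y / (x - y) \<partial>lborel)"
    using integral_Omega_hilbert_le[OF x i] by (intro mult_left_mono) (auto simp: u_def)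
  also have "\<dots> = - g"
    unfolding g by simp
  finally have "bump_height n * bump_width n / (2 * pi) / u \<le> - g" .
  then show ?thesis
    using x by (simp add: hilbert_minorant_def u_def ennreal_leI)
qed

lemma cell_len_sq_mult_ln_num_dipoles:
  "cell_len n ^ 2 * ln (real (num_dipoles n) / 2) = (1 - (1/4) ^ (n+1)) * ln 2"
proof -
  define q :: real where "q = (1/4) ^ (n+1)"
  have ln_N: "ln (real (num_dipoles n) / 2) = (4 ^ (n+1) - 1) * ln 2"
    by (simp add: num_dipoles_def ln_div ln_realpow algebra_simps)
  have q: "cell_len n ^ 2 = q"
    by (simp add: q_def cell_len_def power_mult_distrib[symmetric] power_mult[symmetric] power2_eq_square)
  have "cell_len n ^ 2 * ln (real (num_dipoles n) / 2) = (q * 4 ^ (n+1) - q) * ln 2"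
    unfolding ln_N q by (simp add: algebra_simps)
  also have "q * 4 ^ (n+1) = 1"
    by (simp add: q_def power_mult_distrib[symmetric])
  finally show ?thesis
    by (simp add: q_def)
qed

lemma nn_integral_hilbert_minorant:
  "(\<integral>\<^sup>+x. hilbert_minorant n i x \<partial>lborel)
     = ennreal (bump_height n * bump_width n / (2 * pi) * ln (real (num_dipoles n) / 2))"
proof -
  have "(\<integral>\<^sup>+x. hilbert_minorant n i x \<partial>lborel)
      = ennreal (bump_height n * bump_width n / (2 * pi) * ln (dipole_gap n / (2 * bump_width n)))"
    unfolding hilbert_minorant_def window_def
    using bump_width_pos[of n] two_bump_width_le_gap[of n] bump_height_pos[of n]
    by (intro nn_integral_inverse_dist_Icc) auto
  moreover have "dipole_gap n / (2 * bump_width n) = real (num_dipoles n) / 2"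
    using dipole_gap_pos[of n] num_dipoles_ge_2[of n] by (simp add: bump_width_def)
  ultimately show ?thesis
    by simp
qed

lemma sum_nn_integral_hilbert_minorant_ge:
  "ennreal (3 * ln 2 / (8 * pi)) \<le> (\<Sum>i<num_dipoles n. \<integral>\<^sup>+x. hilbert_minorant n i x \<partial>lborel)"
proof -
  define V where "V = bump_height n * bump_width n / (2 * pi) * ln (real (num_dipoles n) / 2)"
  have "0 \<le> V"
    using bump_height_pos[of n] bump_width_pos[of n] num_dipoles_ge_2[of n] by (simp add: V_def)
  have "(\<Sum>i<num_dipoles n. \<integral>\<^sup>+x. hilbert_minorant n i x \<partial>lborel) = of_nat (num_dipoles n) * ennreal V"
    by (simp add: nn_integral_hilbert_minorant V_def)
  also have "\<dots> = ennreal (num_dipoles n * V)"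
    using \<open>0 \<le> V\<close> by (simp add: ennreal_of_nat_eq_real_of_nat ennreal_mult)
  also have "num_dipoles n * V = cell_len n ^ 2 * ln (real (num_dipoles n) / 2) / (2 * pi)"
    using bump_height_mult_width[of n] num_dipoles_ge_2[of n] by (simp add: V_def field_simps)
  also have "\<dots> = (1 - (1/4) ^ (n+1)) * ln 2 / (2 * pi)"
    by (simp only: cell_len_sq_mult_ln_num_dipoles)
  finally have eq: "(\<Sum>i<num_dipoles n. \<integral>\<^sup>+x. hilbert_minorant n i x \<partial>lborel)
      = ennreal ((1 - (1/4) ^ (n+1)) * ln 2 / (2 * pi))" .
  have "(1/4::real) ^ (n+1) \<le> 1/4"
    by (simp add: power_le_one)
  then have "3 * ln 2 / (8 * pi) \<le> (1 - (1/4) ^ (n+1)) * ln 2 / (2 * pi)"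
    by (simp add: field_simps mult_right_mono)
  then show ?thesis
    unfolding eq by (rule ennreal_leI)
qed

lemma sum_hilbert_minorant_le:
  assumes lim: "((\<lambda>\<epsilon>. trunc_hilbert (\<lambda>y. indicator {0..1} y * Omega y) \<epsilon> x) \<longlongrightarrow> g) (at_right 0)"
  shows "(\<Sum>(n, i)\<in>(SIGMA n:{..<M}. {..<num_dipoles n}). hilbert_minorant n i x) \<le> ennreal \<bar>g\<bar>"
    (is "(\<Sum>(n, i)\<in>?S. _) \<le> _")
proof (cases "\<exists>n i. (n, i) \<in> ?S \<and> x \<in> window n i")
  case True
  then obtain n i where ni: "(n, i) \<in> ?S" "x \<in> window n i"
    by blast
  have "hilbert_minorant m j x = 0" if "(m, j) \<in> ?S" "(m, j) \<noteq> (n, i)" for m j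
  proof -
    have "x \<notin> window m j"
      using window_disjoint[of x n i m j] ni that by auto
    then show ?thesis
      by (simp add: hilbert_minorant_def)
  qed
  then have "(\<Sum>(m, j)\<in>?S. hilbert_minorant m j x) = (\<Sum>(m, j)\<in>{(n, i)}. hilbert_minorant m j x)"
    using ni(1) by (intro sum.mono_neutral_right) auto
  also have "\<dots> \<le> ennreal \<bar>g\<bar>"
    using hilbert_minorant_le[OF lim ni(2)] ni(1) by simp
  finally show ?thesis .
next
  case False
  then have zero: "(\<Sum>(m, j)\<in>?S. hilbert_minorant m j x) = 0"
    by (intro sum.neutral) (auto simp: hilbert_minorant_def)
  show ?thesis
    unfolding zero by simp
qed

lemma nn_integral_abs_hilbert_limit_ge:
  assumes lim: "AE x in lborel.
      ((\<lambda>\<epsilon>. trunc_hilbert (\<lambda>y. indicator {0..1} y * Omega y) \<epsilon> x) \<longlongrightarrow> g x) (at_right 0)"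
  shows "ennreal (real M * (3 * ln 2 / (8 * pi))) \<le> (\<integral>\<^sup>+x. ennreal \<bar>g x\<bar> \<partial>lborel)"
proof -
  let ?S = "SIGMA n:{..<M}. {..<num_dipoles n}"
  have "ennreal (real M * (3 * ln 2 / (8 * pi))) = (\<Sum>n<M. ennreal (3 * ln 2 / (8 * pi)))"
    by (simp add: ennreal_of_nat_eq_real_of_nat ennreal_mult[symmetric] del: ennreal_mult)
  also have "\<dots> \<le> (\<Sum>n<M. \<Sum>i<num_dipoles n. \<integral>\<^sup>+x. hilbert_minorant n i x \<partial>lborel)"
    by (intro sum_mono sum_nn_integral_hilbert_minorant_ge)
  also have "\<dots> = (\<integral>\<^sup>+x. (\<Sum>(n, i)\<in>?S. hilbert_minorant n i x) \<partial>lborel)"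
    by (subst nn_integral_sum) (auto simp: sum.Sigma split_beta)
  also have "\<dots> \<le> (\<integral>\<^sup>+x. ennreal \<bar>g x\<bar> \<partial>lborel)"
    using lim by (intro nn_integral_mono_AE) (auto elim!: eventually_mono intro: sum_hilbert_minorant_le)
  finally show ?thesis .
qed

lemma not_in_H1_circle_Omega: "\<not> in_H1_circle Omega"
proof
  assume "in_H1_circle Omega"
  then obtain g where g: "integrable lborel g" and lim: "AE x in lborel.
      ((\<lambda>\<epsilon>. trunc_hilbert (\<lambda>y. indicator {0..1} y * Omega y) \<epsilon> x) \<longlongrightarrow> g x) (at_right 0)"
    unfolding in_H1_circle_def by blast
  have "(\<integral>\<^sup>+x. ennreal \<bar>g x\<bar> \<partial>lborel) < \<infinity>"
    using g by (simp add: integrable_iff_bounded)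
  then obtain r where r: "(\<integral>\<^sup>+x. ennreal \<bar>g x\<bar> \<partial>lborel) = ennreal r" "0 \<le> r"
    by (cases "\<integral>\<^sup>+x. ennreal \<bar>g x\<bar> \<partial>lborel" rule: ennreal_cases) auto
  obtain M where "r < real M * (3 * ln 2 / (8 * pi))"
    using ex_less_of_nat_mult[of "3 * ln 2 / (8 * pi)" r] by auto
  moreover have "real M * (3 * ln 2 / (8 * pi)) \<le> r"
    using nn_integral_abs_hilbert_limit_ge[OF lim, of M] r by (simp add: ennreal_le_iff)
  ultimately show False
    by simp
qed

theorem mainTheorem8:
  shows "\<exists>\<Omega> :: real \<Rightarrow> real.
     set_integrable lborel {0..1} \<Omega> \<and>
     (LINT x:{0..1}|lborel. \<Omega> x) = 0 \<and>
     \<not> in_H1_circle \<Omega> \<and>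
     (\<forall>\<alpha>::real. \<alpha> > 0 \<longrightarrow>
        (SUP t\<in>{0..1}. \<integral>\<^sup>+ x\<in>{0..1}.
            ennreal (\<bar>\<Omega> x\<bar> * (ln (1 / \<bar>cos (2 * pi * (x - t))\<bar>)) powr (1 + \<alpha>)) \<partial>lborel) < \<infinity>)"
proof (intro exI[of _ Omega] conjI allI impI)
  show "set_integrable lborel {0..1} Omega"
    unfolding set_integrable_def using integrable_Omega by (simp add: indicator_mult_Omega)
  show "(LINT x:{0..1}|lborel. Omega x) = 0"
    unfolding set_lebesgue_integral_def using integral_Omega by (simp add: indicator_mult_Omega)
  show "\<not> in_H1_circle Omega"
    by (rule not_in_H1_circle_Omega)
  show "(SUP t\<in>{0..1}. \<integral>\<^sup>+ x\<in>{0..1}.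
            ennreal (\<bar>Omega x\<bar> * (ln (1 / \<bar>cos (2 * pi * (x - t))\<bar>)) powr (1 + \<alpha>)) \<partial>lborel) < \<infinity>"
    if "\<alpha> > 0" for \<alpha> :: real
    using that by (rule Omega_log_condition)
qed

end
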